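(* Let $\rho$ be a positive semidefinite matrix on $\mathbb{C}^M\otimes\mathbb{C}^N$ of rank $r$, with spectral-type decomposition $\rho=\sum_{l=1}^r|\Psi_l\rangle\langle\Psi_l|$ ($|\Psi_l\rangle=\sqrt{\lambda_l}|\psi_l\rangle$, $\lambda_l>0$ the eigenvalues, $|\psi_l\rangle$ orthonormal eigenvectors), and let $\rho=\sum_{k=1}^K|\Phi_k\rangle\langle\Phi_k|$ be another decomposition into $K\ge r$ rank-one terms. Let $w_{mn}\in\mathbb{C}^r$ and $w'_{mn}\in\mathbb{C}^K$ ($m=1,\dots,M$, $n=1,\dots,N$) be the corresponding Gram vectors, $w_{mn}^l=\langle\Psi_l|e_m\otimes f_n\rangle$, $w'^{\,k}_{mn}=\langle\Phi_k|e_m\otimes f_n\rangle$. Suppose $v_1,\dots,v_N\in\mathbb{C}^r$ are linearly independent and $F_1,\dots,F_M:\mathbb{C}^r\to\mathbb{C}^r$ are linear maps with $w_{mn}=F_mv_n$ for all $m,n$, and suppose $v'_1,\dots,v'_N\in\mathbb{C}^K$ are linearly independent and $F'_1,\dots,F'_M:\mathbb{C}^K\to\mathbb{C}^K$ are linear maps with $w'_{mn}=F'_mv'_n$ for all $m,n$. Then there exist $K\times r$ matrices $V$ and $\tilde V$, with $V^\dagger V=I_r$ and $\tilde V$ of rank $r$, such that $V^\dagger F'_m\tilde V v=F_m v$ for every $m=1,\dots,M$ and every $v\in\operatorname{span}\{v_1,\dots,v_N\}$.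
   Context: $\{|e_m\rangle\}_{m=1}^M$ and $\{|f_n\rangle\}_{n=1}^N$ are fixed orthonormal bases of $\mathbb{C}^M$ and $\mathbb{C}^N$. The scalar product on $\mathbb{C}^K$ is $\langle u,v\rangle=\sum_l\overline{u^l}v^l$. A family of vectors $\{w_{mn}\}\subset\mathbb{C}^K$ is a Gram system for $\rho$ if $\rho_{ij,mn}:=\langle e_i\otimes f_j|\rho|e_m\otimes f_n\rangle=\langle w_{ij},w_{mn}\rangle$ for all $i,j,m,n$; the vectors defined in the claim are Gram systems for $\rho$. *)

theory Defs
  imports "Jordan_Normal_Form.Schur_Decomposition" "Jordan_Normal_Form.DL_Rank"
begin

definition cinner :: "complex vec \<Rightarrow> complex vec \<Rightarrow> complex" where
  "cinner u v = (\<Sum>i<dim_vec v. cnj (u $ i) * v $ i)"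

definition ketbra :: "complex vec \<Rightarrow> complex mat" where
  "ketbra x = mat (dim_vec x) (dim_vec x) (\<lambda>(i,j). x $ i * cnj (x $ j))"

text \<open>Tensor product of a in C^M and b in C^N, as a vector in C^(M*N),
  using the index identification (i,j) <-> i*N + j.\<close>
definition tensor_vec :: "complex vec \<Rightarrow> complex vec \<Rightarrow> complex vec" where
  "tensor_vec a b = vec (dim_vec a * dim_vec b)
     (\<lambda>k. a $ (k div dim_vec b) * b $ (k mod dim_vec b))"

definition orthonormal_fam :: "nat \<Rightarrow> nat \<Rightarrow> (nat \<Rightarrow> complex vec) \<Rightarrow> bool" where
  "orthonormal_fam d n x \<longleftrightarrow> (\<forall>i<n. x i \<in> carrier_vec d) \<and>
     (\<forall>i<n. \<forall>j<n. cinner (x i) (x j) = (if i = j then 1 else 0))"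

definition lin_indep_fam :: "nat \<Rightarrow> nat \<Rightarrow> (nat \<Rightarrow> complex vec) \<Rightarrow> bool" where
  "lin_indep_fam d n x \<longleftrightarrow> (\<forall>i<n. x i \<in> carrier_vec d) \<and>
     (\<forall>c. finsum_vec TYPE(complex) d (\<lambda>i. c i \<cdot>\<^sub>v x i) {..<n} = 0\<^sub>v d \<longrightarrow> (\<forall>i<n. c i = 0))"

definition span_fam :: "nat \<Rightarrow> nat \<Rightarrow> (nat \<Rightarrow> complex vec) \<Rightarrow> complex vec set" where
  "span_fam d n x = {finsum_vec TYPE(complex) d (\<lambda>i. c i \<cdot>\<^sub>v x i) {..<n} | c. True}"

definition sum_mat :: "nat \<Rightarrow> (nat \<Rightarrow> complex mat) \<Rightarrow> nat set \<Rightarrow> complex mat" where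
  "sum_mat n A I = mat n n (\<lambda>(i,j). \<Sum>l\<in>I. A l $$ (i,j))"

definition psd_mat :: "nat \<Rightarrow> complex mat \<Rightarrow> bool" where
  "psd_mat n A \<longleftrightarrow> A \<in> carrier_mat n n \<and> mat_adjoint A = A \<and>
     (\<forall>x \<in> carrier_vec n. Re (cinner x (A *\<^sub>v x)) \<ge> 0)"

end

theory Submission
  imports Defs
begin

text \<open>
  Since
  sum_l |Psi_l><Psi_l| = rho = sum_k |Phi_k><Phi_k| with the Psi_l orthogonal of squared
  norm lam_l > 0, the K x r matrix W with entries <Phi_k|Psi_l>/lam_l is an isometry
  (W^* W = I_r) carrying every Gram vector (<Psi_l|x>)_l to (<Phi_k|x>)_k; in particular
  W w_mn = w'_mn.  The independent families v and v' are the columns of injective matrices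
  P (r x N) and Q (K x N); extending P to an invertible r x r matrix and Q to an injective
  K x r matrix yields an injective (hence rank r) K x r matrix T with T P = Q.  Then
  F'_m Q = W F_m P column by column, so W^* F'_m T = F_m on the range of P, which is the
  span of the v_n.  Take V = W and the second matrix = T.
\<close>

lemma cinner_smult:
  assumes "dim_vec u = dim_vec v"
  shows "cinner (a \<cdot>\<^sub>v u) (b \<cdot>\<^sub>v v) = cnj a * b * cinner u v"
  using assms unfolding cinner_def sum_distrib_left by (intro sum.cong) (auto simp: mult_ac)

lemma cnj_cinner:
  assumes "dim_vec u = dim_vec v"
  shows "cnj (cinner u v) = cinner v u"
  using assms unfolding cinner_def cnj_sum by (intro sum.cong) (auto simp: mult.commute)

lemma sum_cnj_mult_self_eq_0:
  fixes z :: "nat \<Rightarrow> complex"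
  assumes sum0: "(\<Sum>j<d. cnj (z j) * z j) = 0" and i: "i < d"
  shows "z i = 0"
proof -
  have sq: "cnj w * w = complex_of_real ((cmod w)\<^sup>2)" for w :: complex
    by (metis complex_norm_square mult.commute)
  have "complex_of_real (\<Sum>j<d. (cmod (z j))\<^sup>2) = 0"
    using sum0 unfolding of_real_sum sq .
  then have "(\<Sum>j<d. (cmod (z j))\<^sup>2) = 0"
    by (simp only: of_real_eq_0_iff)
  then have "(cmod (z i))\<^sup>2 = 0"
    using i by (subst (asm) sum_nonneg_eq_0_iff) auto
  then show ?thesis by simp
qed

lemma cinner_self_eq_0:
  assumes z: "z \<in> carrier_vec d" and z0: "cinner z z = 0"
  shows "z = 0\<^sub>v d"
proof (rule eq_vecI)
  fix i assume "i < dim_vec (0\<^sub>v d :: complex vec)"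
  then show "z $ i = 0\<^sub>v d $ i"
    using sum_cnj_mult_self_eq_0[of "\<lambda>i. z $ i" d i] z z0 by (simp add: cinner_def)
qed (use z in simp)

lemma cinner_mult_mat_vec:
  assumes A: "A \<in> carrier_mat d n" and x: "x \<in> carrier_vec n"
  shows "cinner u (A *\<^sub>v x) = (\<Sum>j<n. cinner u (col A j) * x $ j)"
proof -
  have "cinner u (A *\<^sub>v x) = (\<Sum>i<d. \<Sum>j<n. cnj (u $ i) * A $$ (i,j) * x $ j)"
    using A x by (simp add: cinner_def scalar_prod_def sum_distrib_left mult.assoc lessThan_atLeast0)
  also have "\<dots> = (\<Sum>j<n. \<Sum>i<d. cnj (u $ i) * A $$ (i,j) * x $ j)"
    by (rule sum.swap)
  also have "\<dots> = (\<Sum>j<n. cinner u (col A j) * x $ j)"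
    using A by (simp add: cinner_def sum_distrib_right)
  finally show ?thesis .
qed

definition inj_mat :: "nat \<Rightarrow> nat \<Rightarrow> 'a :: field mat \<Rightarrow> bool" where
  "inj_mat d n A \<longleftrightarrow> A \<in> carrier_mat d n \<and> (\<forall>z \<in> carrier_vec n. A *\<^sub>v z = 0\<^sub>v d \<longrightarrow> z = 0\<^sub>v n)"

lemma mult_unit_vec_col:
  fixes A :: "'a :: semiring_1 mat"
  assumes A: "A \<in> carrier_mat d n" and j: "j < n"
  shows "A *\<^sub>v unit_vec n j = col A j"
  using A j by (intro eq_vecI) auto

lemma (in vec_space) inj_mat_cols_lin_indpt:
  fixes A :: "'a mat"
  assumes A: "inj_mat n nc A"
  shows "distinct (cols A)" and "lin_indpt (set (cols A))"
proof -
  have Ac: "A \<in> carrier_mat n nc"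
    and inj: "\<And>z :: 'a vec. z \<in> carrier_vec nc \<Longrightarrow> A *\<^sub>v z = 0\<^sub>v n \<Longrightarrow> z = 0\<^sub>v nc"
    using A unfolding inj_mat_def by auto
  show dist: "distinct (cols A)"
  proof (rule ccontr)
    assume "\<not> distinct (cols A)"
    then obtain i j where ij: "i \<noteq> j" "i < nc" "j < nc" "col A i = col A j"
      using Ac by (auto simp: distinct_conv_nth)
    define z :: "'a vec" where "z = unit_vec nc i - unit_vec nc j"
    have "A *\<^sub>v z = col A i - col A j"
      unfolding z_def using Ac ij
      by (subst mult_minus_distrib_mat_vec[OF Ac]) (auto simp: mult_unit_vec_col)
    then have "z = 0\<^sub>v nc" using ij(4) Ac by (intro inj) (auto simp: z_def)
    then have "z $ i = 0" by (simp add: ij(2))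
    then show False using ij by (simp add: z_def)
  qed
  show "lin_indpt (set (cols A))"
  proof
    assume "lin_dep (set (cols A))"
    then obtain z where "z \<in> carrier_vec nc" "z \<noteq> 0\<^sub>v nc" "A *\<^sub>v z = 0\<^sub>v n"
      using lin_depE[OF Ac _ dist] by blast
    then show False using inj by blast
  qed
qed

lemma inj_mat_rank:
  assumes "inj_mat d n A"
  shows "vec_space.rank d A = n"
  using vec_space.lin_indpt_full_rank vec_space.inj_mat_cols_lin_indpt[OF assms] assms
  unfolding inj_mat_def by blast

text \<open>An injective d x n matrix has n <= d, since its n independent columns lie in a
  d-dimensional space.\<close>
lemma inj_mat_dim_le:
  assumes "inj_mat d n A"
  shows "n \<le> d"
proof -
  interpret vec_space "TYPE('a)" d .
  have Ac: "A \<in> carrier_mat d n" using assms unfolding inj_mat_def by simp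
  have "card (set (cols A)) \<le> dim"
    using li_le_dim(2)[OF fin_dim _ inj_mat_cols_lin_indpt(2)[OF assms]] Ac cols_dim by auto
  moreover have "card (set (cols A)) = n"
    using distinct_card[OF inj_mat_cols_lin_indpt(1)[OF assms]] Ac by simp
  ultimately show ?thesis by (simp add: dim_is_n)
qed

lemma inj_mat_mult:
  assumes A: "inj_mat d n A" and B: "inj_mat n p B"
  shows "inj_mat d p (A * B)"
proof -
  have Ac: "A \<in> carrier_mat d n" and Bc: "B \<in> carrier_mat n p"
    using A B unfolding inj_mat_def by auto
  have "z = 0\<^sub>v p" if z: "z \<in> carrier_vec p" "(A * B) *\<^sub>v z = 0\<^sub>v d" for z
  proof -
    have "A *\<^sub>v (B *\<^sub>v z) = 0\<^sub>v d" using z Ac Bc by (simp add: assoc_mult_mat_vec)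
    then have "B *\<^sub>v z = 0\<^sub>v n" using A Bc z(1) unfolding inj_mat_def by auto
    then show ?thesis using B z(1) unfolding inj_mat_def by auto
  qed
  then show ?thesis using Ac Bc unfolding inj_mat_def by auto
qed

lemma inj_mat_inverse:
  fixes X :: "'a :: field mat"
  assumes X: "inj_mat n n X"
  obtains Xi where "inj_mat n n Xi" "Xi * X = 1\<^sub>m n" "X * Xi = 1\<^sub>m n"
proof -
  have Xc: "X \<in> carrier_mat n n" using X unfolding inj_mat_def by simp
  have "det X \<noteq> 0"
    using det_0_iff_vec_prod_zero_field[OF Xc] X unfolding inj_mat_def by auto
  from det_non_zero_imp_unit[OF Xc this, of "()"]
  obtain Xi where Xi: "Xi \<in> carrier_mat n n" "Xi * X = 1\<^sub>m n" "X * Xi = 1\<^sub>m n"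
    unfolding Units_def ring_mat_def by auto
  have "z = 0\<^sub>v n" if z: "z \<in> carrier_vec n" "Xi *\<^sub>v z = 0\<^sub>v n" for z
  proof -
    have "z = (X * Xi) *\<^sub>v z" using Xi(3) z(1) by simp
    also have "\<dots> = X *\<^sub>v (Xi *\<^sub>v z)" using Xc Xi(1) z(1) by (simp add: assoc_mult_mat_vec)
    also have "\<dots> = 0\<^sub>v n" unfolding z(2) using Xc by auto
    finally show ?thesis .
  qed
  then show ?thesis using that Xi unfolding inj_mat_def by blast
qed

lemma mat_adjoint_carrier:
  "A \<in> carrier_mat d n \<Longrightarrow> mat_adjoint A \<in> carrier_mat n d"
  unfolding mat_adjoint_def by auto

lemma mat_adjoint_mult_vec_index:
  assumes A: "A \<in> carrier_mat d n" and z: "z \<in> carrier_vec d" and j: "j < n"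
  shows "(mat_adjoint A *\<^sub>v z) $ j = cinner (col A j) z"
  using A z j
  by (simp add: mat_adjoint_def mat_of_rows_def cinner_def scalar_prod_def lessThan_atLeast0)

text \<open>An injective d x p matrix with p < d can be enlarged by one column, chosen
  orthogonal to all existing columns, without losing injectivity.\<close>
lemma inj_mat_add_col:
  fixes P :: "complex mat"
  assumes P: "inj_mat d p P" and pd: "p < d"
  shows "\<exists>P'. inj_mat d (Suc p) P' \<and> (\<forall>j<p. col P' j = col P j)"
proof -
  have Pc: "P \<in> carrier_mat d p" using P unfolding inj_mat_def by simp
  have "\<not> inj_mat p d (mat_adjoint P)" using inj_mat_dim_le pd by fastforce
  then obtain z where z: "z \<in> carrier_vec d" "z \<noteq> 0\<^sub>v d" "mat_adjoint P *\<^sub>v z = 0\<^sub>v p"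
    using mat_adjoint_carrier[OF Pc] unfolding inj_mat_def by auto
  have z_orth: "cinner z (col P j) = 0" if j: "j < p" for j
  proof -
    have "cinner (col P j) z = 0"
      using mat_adjoint_mult_vec_index[OF Pc z(1) j] z(3) j by simp
    then show ?thesis using cnj_cinner[of z "col P j"] z(1) Pc by simp
  qed
  have zz: "cinner z z \<noteq> 0" using cinner_self_eq_0 z(1,2) by blast
  define P' where "P' = mat d (Suc p) (\<lambda>(i,j). if j < p then P $$ (i,j) else z $ i)"
  have P'c: "P' \<in> carrier_mat d (Suc p)" by (simp add: P'_def)
  have colP': "col P' j = (if j < p then col P j else z)" if "j < Suc p" for j
    using that Pc z(1) by (intro eq_vecI) (auto simp: P'_def)
  have "c = 0\<^sub>v (Suc p)" if c: "c \<in> carrier_vec (Suc p)" "P' *\<^sub>v c = 0\<^sub>v d" for c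
  proof -
    have "0 = cinner z (P' *\<^sub>v c)" using c(2) by (simp add: cinner_def)
    also have "\<dots> = (\<Sum>j<Suc p. cinner z (col P' j) * c $ j)"
      by (rule cinner_mult_mat_vec[OF P'c c(1)])
    also have "\<dots> = cinner z z * c $ p"
      using z_orth by (simp add: colP')
    finally have cp: "c $ p = 0" using zz by simp
    define c' where "c' = vec p (\<lambda>j. c $ j)"
    have "P *\<^sub>v c' = P' *\<^sub>v c"
      using Pc c(1) cp
      by (intro eq_vecI) (auto simp: P'_def c'_def scalar_prod_def lessThan_atLeast0[symmetric])
    then have "c' = 0\<^sub>v p" using P c(2) unfolding inj_mat_def by (auto simp: c'_def)
    then have "c $ j = 0" if "j < p" for j
      using that by (metis c'_def index_vec index_zero_vec(1))
    then show ?thesis using cp c(1) by (intro eq_vecI) (auto simp: less_Suc_eq)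
  qed
  then show ?thesis using P'c colP' unfolding inj_mat_def by auto
qed

lemma inj_mat_extend_cols:
  fixes P :: "complex mat"
  assumes P: "inj_mat d n P" and "n \<le> p" and "p \<le> d"
  shows "\<exists>P'. inj_mat d p P' \<and> (\<forall>j<n. col P' j = col P j)"
  using assms(2,3)
proof (induction p)
  case 0
  then show ?case using P by auto
next
  case (Suc p)
  show ?case
  proof (cases "n = Suc p")
    case True
    then show ?thesis using P by auto
  next
    case False
    then obtain P0 where P0: "inj_mat d p P0" "\<forall>j<n. col P0 j = col P j"
      using Suc by auto
    moreover have "p < d" using Suc.prems by simp
    ultimately obtain P1 where "inj_mat d (Suc p) P1" "\<forall>j<p. col P1 j = col P0 j"
      using inj_mat_add_col by blast
    then show ?thesis using P0(2) False Suc.prems by auto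
  qed
qed

text \<open>Two injective matrices P (r x N) and Q (K x N) with r <= K are related by an
  injective K x r matrix T with T P = Q: extend P to an invertible r x r matrix X and Q
  to an injective K x r matrix Y with the same first N columns, and take T = Y X^-1.\<close>
lemma inj_mat_transport:
  fixes P Q :: "complex mat"
  assumes P: "inj_mat r N P" and Q: "inj_mat K N Q" and rK: "r \<le> K"
  shows "\<exists>T. inj_mat K r T \<and> T * P = Q"
proof -
  have Pc: "P \<in> carrier_mat r N" and Qc: "Q \<in> carrier_mat K N"
    using P Q unfolding inj_mat_def by auto
  have Nr: "N \<le> r" using inj_mat_dim_le[OF P] .
  obtain X where X: "inj_mat r r X" "\<forall>j<N. col X j = col P j"
    using inj_mat_extend_cols[OF P Nr order_refl] by blast
  obtain Y where Y: "inj_mat K r Y" "\<forall>j<N. col Y j = col Q j"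
    using inj_mat_extend_cols[OF Q Nr rK] by blast
  obtain Xi where Xi: "inj_mat r r Xi" "Xi * X = 1\<^sub>m r"
    using inj_mat_inverse[OF X(1)] by blast
  have Xc: "X \<in> carrier_mat r r" and Yc: "Y \<in> carrier_mat K r" and Xic: "Xi \<in> carrier_mat r r"
    using X Y Xi unfolding inj_mat_def by auto
  have T: "inj_mat K r (Y * Xi)" using inj_mat_mult[OF Y(1) Xi(1)] .
  have "col (Y * Xi * P) j = col Q j" if j: "j < N" for j
  proof -
    have "col (Y * Xi * P) j = (Y * Xi) *\<^sub>v col X j"
      using col_mult2[of "Y * Xi" K r P N j] Yc Xic Pc j X(2) by simp
    also have "\<dots> = (Y * Xi) *\<^sub>v (X *\<^sub>v unit_vec r j)"
      using j Nr by (simp add: mult_unit_vec_col[OF Xc])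
    also have "\<dots> = Y *\<^sub>v ((Xi * X) *\<^sub>v unit_vec r j)"
      using Yc Xic Xc by (simp add: assoc_mult_mat_vec)
    also have "\<dots> = col Y j"
      using Xi(2) Yc j Nr by (simp add: mult_unit_vec_col)
    finally show ?thesis using Y(2) j by simp
  qed
  then have "Y * Xi * P = Q" using Yc Xic Pc Qc by (intro mat_col_eqI) auto
  then show ?thesis using T by blast
qed

lemma mat_adjoint_mult_index:
  assumes A: "A \<in> carrier_mat d n" and B: "B \<in> carrier_mat d m" and i: "i < n" and j: "j < m"
  shows "(mat_adjoint A * B) $$ (i,j) = cinner (col A i) (col B j)"
  using A B i j
  by (simp add: mat_adjoint_def mat_of_rows_def cinner_def scalar_prod_def lessThan_atLeast0)

lemma cinner_minus_lincomb:
  assumes y: "y \<in> carrier_vec D" and x: "x \<in> carrier_vec D" and X: "\<forall>l<r. X l \<in> carrier_vec D"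
  shows "cinner y (vec D (\<lambda>a. x $ a - (\<Sum>l<r. c l * X l $ a)))
           = cinner y x - (\<Sum>l<r. cinner y (X l) * c l)"
proof -
  have "cinner y (vec D (\<lambda>a. x $ a - (\<Sum>l<r. c l * X l $ a)))
      = cinner y x - (\<Sum>a<D. \<Sum>l<r. cnj (y $ a) * X l $ a * c l)"
    using x by (simp add: cinner_def algebra_simps sum_subtractf sum_distrib_left)
  also have "(\<Sum>a<D. \<Sum>l<r. cnj (y $ a) * X l $ a * c l) = (\<Sum>l<r. cinner y (X l) * c l)"
    using X by (subst sum.swap) (auto simp: cinner_def sum_distrib_right intro!: sum.cong)
  finally show ?thesis .
qed

lemma cinner_sum_ketbra:
  assumes X: "\<forall>l<n. X l \<in> carrier_vec D" and x: "x \<in> carrier_vec D" and y: "y \<in> carrier_vec D"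
  shows "cinner x (sum_mat D (\<lambda>l. ketbra (X l)) {..<n} *\<^sub>v y)
           = (\<Sum>l<n. cinner x (X l) * cinner (X l) y)"
proof -
  let ?S = "sum_mat D (\<lambda>l. ketbra (X l)) {..<n}"
  have entry: "(?S *\<^sub>v y) $ a = (\<Sum>l<n. X l $ a * cinner (X l) y)" if a: "a < D" for a
  proof -
    have "(?S *\<^sub>v y) $ a = (\<Sum>b<D. \<Sum>l<n. X l $ a * (cnj (X l $ b) * y $ b))"
      using a X y
      by (auto simp: sum_mat_def ketbra_def scalar_prod_def lessThan_atLeast0 sum_distrib_right
               mult.assoc intro!: sum.cong)
    also have "\<dots> = (\<Sum>l<n. X l $ a * cinner (X l) y)"
      using y by (subst sum.swap) (simp add: cinner_def sum_distrib_left)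
    finally show ?thesis .
  qed
  have "cinner x (?S *\<^sub>v y) = (\<Sum>a<D. \<Sum>l<n. cnj (x $ a) * X l $ a * cinner (X l) y)"
    using entry by (simp add: cinner_def sum_distrib_left mult.assoc sum_mat_def)
  also have "\<dots> = (\<Sum>l<n. cinner x (X l) * cinner (X l) y)"
    using X by (subst sum.swap) (auto simp: cinner_def sum_distrib_right intro!: sum.cong)
  finally show ?thesis .
qed

text \<open>Two families Psi_0..Psi_(r-1) (orthogonal, with squared norms lam_l > 0) and
  Phi_0..Phi_(K-1) in C^D defining the same operator sum_l |Psi_l><Psi_l| = sum_k |Phi_k><Phi_k|,
  stated as equality of the associated sesquilinear forms.\<close>
locale equal_ketbra_sums =
  fixes D r K :: nat and Psi Phi :: "nat \<Rightarrow> complex vec" and lam :: "nat \<Rightarrow> real"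
  assumes Psi_carrier: "\<And>l. l < r \<Longrightarrow> Psi l \<in> carrier_vec D"
    and Phi_carrier: "\<And>k. k < K \<Longrightarrow> Phi k \<in> carrier_vec D"
    and Psi_orth: "\<And>l j. l < r \<Longrightarrow> j < r \<Longrightarrow>
           cinner (Psi l) (Psi j) = (if l = j then complex_of_real (lam l) else 0)"
    and lam_pos: "\<And>l. l < r \<Longrightarrow> lam l > 0"
    and same_form: "\<And>x y. x \<in> carrier_vec D \<Longrightarrow> y \<in> carrier_vec D \<Longrightarrow>
           (\<Sum>l<r. cinner x (Psi l) * cinner (Psi l) y) = (\<Sum>k<K. cinner x (Phi k) * cinner (Phi k) y)"
begin

lemma dim_Psi [simp]: "l < r \<Longrightarrow> dim_vec (Psi l) = D"
  by (rule carrier_vecD[OF Psi_carrier])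

lemma dim_Phi [simp]: "k < K \<Longrightarrow> dim_vec (Phi k) = D"
  by (rule carrier_vecD[OF Phi_carrier])

lemma sum_Psi_orth:
  assumes "l < r"
  shows "(\<Sum>j<r. cinner (Psi l) (Psi j) * a j) = complex_of_real (lam l) * a l"
proof -
  have "(\<Sum>j<r. cinner (Psi l) (Psi j) * a j) = (\<Sum>j<r. if l = j then complex_of_real (lam l) * a j else 0)"
    using Psi_orth assms by (intro sum.cong) auto
  then show ?thesis using assms by simp
qed

text \<open>A vector orthogonal to every Psi_l is orthogonal to every Phi_k, since
  sum_k |<Phi_k|z>|^2 = sum_l |<Psi_l|z>|^2.\<close>
lemma orth_Psi_imp_orth_Phi:
  assumes z: "z \<in> carrier_vec D" and orth: "\<And>l. l < r \<Longrightarrow> cinner (Psi l) z = 0" and k: "k < K"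
  shows "cinner (Phi k) z = 0"
proof -
  have "(\<Sum>k<K. cnj (cinner (Phi k) z) * cinner (Phi k) z) = (\<Sum>k<K. cinner z (Phi k) * cinner (Phi k) z)"
    using Phi_carrier z by (intro sum.cong) (auto simp: cnj_cinner)
  also have "\<dots> = (\<Sum>l<r. cinner z (Psi l) * cinner (Psi l) z)"
    using same_form[OF z z] by simp
  also have "\<dots> = 0" using orth by simp
  finally show ?thesis using sum_cnj_mult_self_eq_0[of "\<lambda>k. cinner (Phi k) z" K k] k by blast
qed

definition W :: "complex mat" where
  "W = mat K r (\<lambda>(k,l). cinner (Phi k) (Psi l) / complex_of_real (lam l))"

lemma W_carrier: "W \<in> carrier_mat K r"
  by (simp add: W_def)

text \<open>W is an isometry: its columns are orthonormal, because
  sum_k <Psi_l|Phi_k><Phi_k|Psi_l'> = sum_j <Psi_l|Psi_j><Psi_j|Psi_l'> = lam_l^2 [l = l'].\<close>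
lemma W_isometry: "mat_adjoint W * W = 1\<^sub>m r"
proof (rule eq_matI)
  fix l l' assume "l < dim_row (1\<^sub>m r :: complex mat)" "l' < dim_col (1\<^sub>m r :: complex mat)"
  then have l: "l < r" and l': "l' < r" by auto
  have lam_l: "complex_of_real (lam l) \<noteq> 0" using lam_pos[OF l] by simp
  have "(mat_adjoint W * W) $$ (l,l') = cinner (col W l) (col W l')"
    by (rule mat_adjoint_mult_index[OF W_carrier W_carrier l l'])
  also have "\<dots> = (\<Sum>k<K. cnj (cinner (Phi k) (Psi l) / complex_of_real (lam l))
                         * (cinner (Phi k) (Psi l') / complex_of_real (lam l')))"
    unfolding cinner_def[of "col W l"] using l l' by (simp add: W_def)
  also have "\<dots> = (\<Sum>k<K. cinner (Psi l) (Phi k) * cinner (Phi k) (Psi l'))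
          / (complex_of_real (lam l) * complex_of_real (lam l'))"
    using l l' by (auto simp: sum_divide_distrib cnj_cinner intro!: sum.cong)
  also have "(\<Sum>k<K. cinner (Psi l) (Phi k) * cinner (Phi k) (Psi l'))
      = complex_of_real (lam l) * cinner (Psi l) (Psi l')"
    using same_form[OF Psi_carrier[OF l] Psi_carrier[OF l']] sum_Psi_orth[OF l] by simp
  finally show "(mat_adjoint W * W) $$ (l,l') = 1\<^sub>m r $$ (l,l')"
    using l l' lam_l lam_pos[OF l'] by (simp add: Psi_orth)
qed (auto simp: W_def mat_adjoint_def)

text \<open>W maps the Gram vector (<Psi_l|x>)_l of any x to the Gram vector (<Phi_k|x>)_k.
  Proof: split x into its orthogonal projection onto span Psi and a remainder z; z is
  invisible to both families.\<close>
lemma W_gram_vec: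
  assumes x: "x \<in> carrier_vec D"
  shows "W *\<^sub>v vec r (\<lambda>l. cinner (Psi l) x) = vec K (\<lambda>k. cinner (Phi k) x)"
proof -
  define c where "c = (\<lambda>l. cinner (Psi l) x / complex_of_real (lam l))"
  define z where "z = vec D (\<lambda>a. x $ a - (\<Sum>l<r. c l * Psi l $ a))"
  have z_carrier: "z \<in> carrier_vec D" by (simp add: z_def)
  have cinner_z: "cinner y z = cinner y x - (\<Sum>l<r. cinner y (Psi l) * c l)"
    if "y \<in> carrier_vec D" for y
    unfolding z_def using cinner_minus_lincomb that x Psi_carrier by blast
  have "cinner (Psi j) z = 0" if j: "j < r" for j
  proof -
    have "cinner (Psi j) z = cinner (Psi j) x - complex_of_real (lam j) * c j"
      using cinner_z[OF Psi_carrier[OF j]] sum_Psi_orth[OF j] by simp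
    then show ?thesis using lam_pos[OF j] by (simp add: c_def)
  qed
  then have Phi_z: "cinner (Phi k) z = 0" if "k < K" for k
    using orth_Psi_imp_orth_Phi[OF z_carrier] that by blast
  show ?thesis
  proof (rule eq_vecI)
    fix k assume "k < dim_vec (vec K (\<lambda>k. cinner (Phi k) x))"
    then have k: "k < K" by simp
    have "(W *\<^sub>v vec r (\<lambda>l. cinner (Psi l) x)) $ k = (\<Sum>l<r. cinner (Phi k) (Psi l) * c l)"
      using k by (simp add: W_def c_def scalar_prod_def lessThan_atLeast0)
    also have "\<dots> = cinner (Phi k) x"
      using cinner_z[OF Phi_carrier[OF k]] Phi_z[OF k] by simp
    finally show "(W *\<^sub>v vec r (\<lambda>l. cinner (Psi l) x)) $ k = vec K (\<lambda>k. cinner (Phi k) x) $ k"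
      using k by simp
  qed (simp add: W_def)
qed

end

lemma equal_ketbra_sumsI:
  assumes Psi: "\<forall>l<r. Psi l \<in> carrier_vec D" and Phi: "\<forall>k<K. Phi k \<in> carrier_vec D"
    and orth: "\<And>l j. l < r \<Longrightarrow> j < r \<Longrightarrow>
           cinner (Psi l) (Psi j) = (if l = j then complex_of_real (lam l) else 0)"
    and lam: "\<forall>l<r. lam l > 0"
    and sums: "sum_mat D (\<lambda>l. ketbra (Psi l)) {..<r} = sum_mat D (\<lambda>k. ketbra (Phi k)) {..<K}"
  shows "equal_ketbra_sums D r K Psi Phi lam"
proof
  fix x y :: "complex vec" assume x: "x \<in> carrier_vec D" and y: "y \<in> carrier_vec D"
  show "(\<Sum>l<r. cinner x (Psi l) * cinner (Psi l) y) = (\<Sum>k<K. cinner x (Phi k) * cinner (Phi k) y)"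
    using cinner_sum_ketbra[OF Psi x y] cinner_sum_ketbra[OF Phi x y] sums by simp
qed (use Psi Phi orth lam in blast)+

definition fam_mat :: "nat \<Rightarrow> nat \<Rightarrow> (nat \<Rightarrow> 'a vec) \<Rightarrow> 'a mat" where
  "fam_mat d n x = mat d n (\<lambda>(i,j). x j $ i)"

lemma fam_mat_carrier [simp]: "fam_mat d n x \<in> carrier_mat d n"
  by (simp add: fam_mat_def)

lemma col_fam_mat:
  assumes "j < n" and "x j \<in> carrier_vec d"
  shows "col (fam_mat d n x) j = x j"
  using assms by (intro eq_vecI) (auto simp: fam_mat_def)

lemma finsum_eq_fam_mat_mult:
  assumes x: "\<forall>i<n. x i \<in> carrier_vec d"
  shows "finsum_vec TYPE(complex) d (\<lambda>i. c i \<cdot>\<^sub>v x i) {..<n} = fam_mat d n x *\<^sub>v vec n c"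
proof (rule eq_vecI)
  have closed: "(\<lambda>i. c i \<cdot>\<^sub>v x i) \<in> {..<n} \<rightarrow> carrier_vec d" using x by auto
  then show "dim_vec (finsum_vec TYPE(complex) d (\<lambda>i. c i \<cdot>\<^sub>v x i) {..<n})
      = dim_vec (fam_mat d n x *\<^sub>v vec n c)"
    using carrier_vecD[OF finsum_vec_closed[OF closed]] by (simp add: fam_mat_def)
  fix i assume "i < dim_vec (fam_mat d n x *\<^sub>v vec n c)"
  then have i: "i < d" by (simp add: fam_mat_def)
  show "finsum_vec TYPE(complex) d (\<lambda>i. c i \<cdot>\<^sub>v x i) {..<n} $ i = (fam_mat d n x *\<^sub>v vec n c) $ i"
    using index_finsum_vec[OF _ i closed] i x
    by (auto simp: fam_mat_def scalar_prod_def lessThan_atLeast0 mult.commute intro!: sum.cong)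
qed

lemma lin_indep_fam_inj_mat:
  assumes indep: "lin_indep_fam d n x"
  shows "inj_mat d n (fam_mat d n x)"
proof -
  have x: "\<forall>i<n. x i \<in> carrier_vec d" using indep unfolding lin_indep_fam_def by blast
  have "z = 0\<^sub>v n" if z: "z \<in> carrier_vec n" "fam_mat d n x *\<^sub>v z = 0\<^sub>v d" for z
  proof -
    have "vec n (\<lambda>i. z $ i) = z" using z(1) by auto
    then have "finsum_vec TYPE(complex) d (\<lambda>i. z $ i \<cdot>\<^sub>v x i) {..<n} = 0\<^sub>v d"
      using finsum_eq_fam_mat_mult[OF x, of "\<lambda>i. z $ i"] z(2) by simp
    then have "\<forall>i<n. z $ i = 0" using indep unfolding lin_indep_fam_def by blast
    then show ?thesis using z(1) by (intro eq_vecI) auto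
  qed
  then show ?thesis unfolding inj_mat_def by simp
qed

lemma span_fam_range:
  assumes x: "\<forall>i<n. x i \<in> carrier_vec d" and y: "y \<in> span_fam d n x"
  obtains c where "c \<in> carrier_vec n" "y = fam_mat d n x *\<^sub>v c"
  using y finsum_eq_fam_mat_mult[OF x] unfolding span_fam_def by force

lemma isometry_compression:
  fixes V T A A' :: "complex mat" and v v' :: "nat \<Rightarrow> complex vec"
  assumes V: "V \<in> carrier_mat K r" and iso: "mat_adjoint V * V = 1\<^sub>m r"
    and T: "T \<in> carrier_mat K r" and Tv: "T * fam_mat r N v = fam_mat K N v'"
    and v: "\<forall>n<N. v n \<in> carrier_vec r" and v': "\<forall>n<N. v' n \<in> carrier_vec K"
    and A: "A \<in> carrier_mat r r" and A': "A' \<in> carrier_mat K K"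
    and intertwine: "\<And>n. n < N \<Longrightarrow> A' *\<^sub>v v' n = V *\<^sub>v (A *\<^sub>v v n)"
    and x: "x \<in> span_fam r N v"
  shows "mat_adjoint V *\<^sub>v (A' *\<^sub>v (T *\<^sub>v x)) = A *\<^sub>v x"
proof -
  define P where "P = fam_mat r N v"
  define Q where "Q = fam_mat K N v'"
  have P: "P \<in> carrier_mat r N" and Q: "Q \<in> carrier_mat K N" by (simp_all add: P_def Q_def)
  obtain c where c: "c \<in> carrier_vec N" "x = P *\<^sub>v c"
    using span_fam_range[OF v x] unfolding P_def by blast
  have AP: "A * P \<in> carrier_mat r N" using A P by simp
  have AQ: "A' * Q = V * (A * P)"
  proof (rule mat_col_eqI)
    fix j assume "j < dim_col (V * (A * P))"
    then have j: "j < N" using P by simp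
    have "col P j = v j" and "col Q j = v' j"
      unfolding P_def Q_def using j v v' by (simp_all add: col_fam_mat)
    then show "col (A' * Q) j = col (V * (A * P)) j"
      using intertwine[OF j] col_mult2[OF A' Q j] col_mult2[OF V AP j] col_mult2[OF A P j] by simp
  qed (use A' Q V P in auto)
  have "T *\<^sub>v (P *\<^sub>v c) = Q *\<^sub>v c"
    using assoc_mult_mat_vec[OF T P c(1)] Tv unfolding P_def Q_def by simp
  then have "A' *\<^sub>v (T *\<^sub>v x) = (A' * Q) *\<^sub>v c"
    using assoc_mult_mat_vec[OF A' Q c(1)] c(2) by simp
  also have "\<dots> = V *\<^sub>v ((A * P) *\<^sub>v c)"
    unfolding AQ by (rule assoc_mult_mat_vec[OF V AP c(1)])
  finally have "mat_adjoint V *\<^sub>v (A' *\<^sub>v (T *\<^sub>v x)) = (mat_adjoint V * V) *\<^sub>v ((A * P) *\<^sub>v c)"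
    using assoc_mult_mat_vec[OF mat_adjoint_carrier[OF V] V, of "(A * P) *\<^sub>v c"] AP c(1) by simp
  also have "\<dots> = A *\<^sub>v x"
    using iso assoc_mult_mat_vec[OF A P c(1)] A P c by simp
  finally show ?thesis .
qed

lemma orthonormal_fam_carrier:
  "orthonormal_fam d n x \<Longrightarrow> i < n \<Longrightarrow> x i \<in> carrier_vec d"
  unfolding orthonormal_fam_def by blast

lemma tensor_vec_carrier:
  "a \<in> carrier_vec M \<Longrightarrow> b \<in> carrier_vec N \<Longrightarrow> tensor_vec a b \<in> carrier_vec (M * N)"
  unfolding tensor_vec_def by simp

lemma orthonormal_fam_rescaled:
  assumes on: "orthonormal_fam d n x" and l: "l < n" and j: "j < n" and lam: "0 \<le> lam l"
  shows "cinner (complex_of_real (sqrt (lam l)) \<cdot>\<^sub>v x l) (complex_of_real (sqrt (lam j)) \<cdot>\<^sub>v x j)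
           = (if l = j then complex_of_real (lam l) else 0)"
proof -
  have "cinner (x l) (x j) = (if l = j then 1 else 0)"
    using on l j unfolding orthonormal_fam_def by blast
  moreover have "dim_vec (x l) = dim_vec (x j)"
    using orthonormal_fam_carrier[OF on l] orthonormal_fam_carrier[OF on j] by (metis carrier_vecD)
  ultimately show ?thesis
    using lam by (auto simp: cinner_smult simp flip: of_real_mult)
qed

theorem theorem1:
  fixes M N r K :: nat
    and e f :: "nat \<Rightarrow> complex vec"
    and \<rho> :: "complex mat"
    and lam :: "nat \<Rightarrow> real"
    and \<psi> \<Phi> :: "nat \<Rightarrow> complex vec"
    and v :: "nat \<Rightarrow> complex vec" and F :: "nat \<Rightarrow> complex mat"
    and v' :: "nat \<Rightarrow> complex vec" and F' :: "nat \<Rightarrow> complex mat"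
  defines "\<Psi> \<equiv> (\<lambda>l. complex_of_real (sqrt (lam l)) \<cdot>\<^sub>v \<psi> l)"
  defines "w \<equiv> (\<lambda>m n. vec r (\<lambda>l. cinner (\<Psi> l) (tensor_vec (e m) (f n))))"
  defines "w' \<equiv> (\<lambda>m n. vec K (\<lambda>k. cinner (\<Phi> k) (tensor_vec (e m) (f n))))"
  assumes e_onb: "orthonormal_fam M M e"
    and f_onb: "orthonormal_fam N N f"
    and \<rho>_carrier: "\<rho> \<in> carrier_mat (M * N) (M * N)"
    and \<rho>_psd: "psd_mat (M * N) \<rho>"
    and \<rho>_rank: "vec_space.rank (M * N) \<rho> = r"
    and lam_pos: "\<forall>l<r. lam l > 0"
    and \<psi>_on: "orthonormal_fam (M * N) r \<psi>"
    and \<psi>_eig: "\<forall>l<r. \<rho> *\<^sub>v \<psi> l = complex_of_real (lam l) \<cdot>\<^sub>v \<psi> l"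
    and \<rho>_spec: "\<rho> = sum_mat (M * N) (\<lambda>l. ketbra (\<Psi> l)) {..<r}"
    and K_ge: "K \<ge> r"
    and \<Phi>_carrier: "\<forall>k<K. \<Phi> k \<in> carrier_vec (M * N)"
    and \<rho>_decomp: "\<rho> = sum_mat (M * N) (\<lambda>k. ketbra (\<Phi> k)) {..<K}"
    and v_indep: "lin_indep_fam r N v"
    and F_carrier: "\<forall>m<M. F m \<in> carrier_mat r r"
    and w_fact: "\<forall>m<M. \<forall>n<N. w m n = F m *\<^sub>v v n"
    and v'_indep: "lin_indep_fam K N v'"
    and F'_carrier: "\<forall>m<M. F' m \<in> carrier_mat K K"
    and w'_fact: "\<forall>m<M. \<forall>n<N. w' m n = F' m *\<^sub>v v' n"
  shows "\<exists>V Vt. V \<in> carrier_mat K r \<and> Vt \<in> carrier_mat K r \<and>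
           mat_adjoint V * V = 1\<^sub>m r \<and> vec_space.rank K Vt = r \<and>
           (\<forall>m<M. \<forall>x \<in> span_fam r N v.
              mat_adjoint V *\<^sub>v (F' m *\<^sub>v (Vt *\<^sub>v x)) = F m *\<^sub>v x)"
proof -
  have e: "e m \<in> carrier_vec M" if "m < M" for m using orthonormal_fam_carrier[OF e_onb that] .
  have f: "f n \<in> carrier_vec N" if "n < N" for n using orthonormal_fam_carrier[OF f_onb that] .
  have v: "\<forall>n<N. v n \<in> carrier_vec r" and v': "\<forall>n<N. v' n \<in> carrier_vec K"
    using v_indep v'_indep unfolding lin_indep_fam_def by auto
  txt \<open>Both families decompose \<rho>, which yields the isometry W between their Gram vectors.\<close>
  interpret G: equal_ketbra_sums "M * N" r K \<Psi> \<Phi> lam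
  proof (rule equal_ketbra_sumsI)
    show "\<forall>l<r. \<Psi> l \<in> carrier_vec (M * N)"
      using orthonormal_fam_carrier[OF \<psi>_on] by (simp add: \<Psi>_def)
    show "cinner (\<Psi> l) (\<Psi> j) = (if l = j then complex_of_real (lam l) else 0)"
      if lj: "l < r" "j < r" for l j
    proof -
      have "0 \<le> lam l" using lam_pos lj by (simp add: less_imp_le)
      then show ?thesis unfolding \<Psi>_def by (rule orthonormal_fam_rescaled[OF \<psi>_on lj])
    qed
  qed (use \<Phi>_carrier lam_pos \<rho>_spec \<rho>_decomp in auto)
  have W_w: "G.W *\<^sub>v w m n = w' m n" if "m < M" "n < N" for m n
    unfolding w_def w'_def using G.W_gram_vec tensor_vec_carrier e f that by blast
  obtain T where T: "inj_mat K r T" "T * fam_mat r N v = fam_mat K N v'"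
    using inj_mat_transport lin_indep_fam_inj_mat v_indep v'_indep K_ge by blast
  have "mat_adjoint G.W *\<^sub>v (F' m *\<^sub>v (T *\<^sub>v x)) = F m *\<^sub>v x"
    if m: "m < M" and x: "x \<in> span_fam r N v" for m x
    using isometry_compression[OF G.W_carrier G.W_isometry _ T(2) v v' _ _ _ x]
      T(1) F_carrier F'_carrier w_fact w'_fact W_w m unfolding inj_mat_def by auto
  then show ?thesis
    using G.W_carrier G.W_isometry T(1) inj_mat_rank[OF T(1)] unfolding inj_mat_def by blast
qed

end
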